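(* Let $s\in(0,1]$, $\lambda>0$, $\sigma\ge d/2+6$, and let $f$ be a function on $\mathbb{T}^d\times\mathbb{R}^d$ with spatial density $\rho=\int f\,dv$ (Fourier coefficients $\rho_l$). For a multi-index $\alpha$, set $$E^2_{NL}=\sum_{k\in\mathbb{Z}^d}\int_{\mathbb{R}^d}A_k(\eta)D^\alpha_\eta\overline{\hat f_k(\eta)}\;A_k(\eta)\Big[\sum_{|j|=1,\,j\le\alpha}\ \sum_{l\in\mathbb{Z}^d\setminus\{0\}}\rho_l\widehat W(l)\,l_j\,D^{\alpha-j}_\eta\hat f_{k-l}(\eta)\Big]d\eta,$$ where $j$ ranges over unit multi-indices with $j\le\alpha$ componentwise and $l_j$ is the corresponding component of $l$. Then $$|E^2_{NL}|\lesssim\|v^\alpha f\|_{\lambda,\sigma}\,\|\rho\|_{\lambda,\sigma;s}\sum_{|j|=1,\,j\le\alpha}\|v^{\alpha-j}f\|_{\lambda,\sigma},$$ with an implicit constant depending only on $d,\sigma,s$ and $W$.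
   Context: $\hat f_k(\eta)=(2\pi)^{-d}\int e^{-ix\cdot k-iv\cdot\eta}f\,dx\,dv$, $\rho_l=(2\pi)^{-d}\int_{\mathbb{T}^d}e^{-ix\cdot l}\rho\,dx$, $\langle k,\eta\rangle=(1+|k|^2+|\eta|^2)^{1/2}$, $\langle k\rangle=(1+|k|^2)^{1/2}$, $A_k(\eta)=\langle k,\eta\rangle^\sigma e^{\lambda\langle k,\eta\rangle^s}$. $W$ is the Coulomb or Newtonian potential on $\mathbb{T}^d$, with $|\widehat W(l)|\le C_W|l|^{-2}$ for $l\ne0$. $\|v^\alpha f\|_{\lambda,\sigma}^2=\sum_{k}\int|D^\alpha_\eta\hat f_k(\eta)|^2\langle k,\eta\rangle^{2\sigma}e^{2\lambda\langle k,\eta\rangle^s}d\eta$; $\|\rho\|_{\lambda,\sigma;s}^2=\sum_k|\rho_k|^2\langle k\rangle^{2\sigma}e^{2\lambda\langle k\rangle^s}$. *)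

theory Defs
  imports "HOL-Analysis.Analysis"
begin

text \<open>Dimension d = CARD('n). Frequencies k in Z^d are int^'n, eta, x, v in R^d are real^'n.\<close>

definition torus_box :: "(real^'n) set" where
  "torus_box = cbox 0 (\<chi> i. 2 * pi)"

definition dotZ :: "real^'n \<Rightarrow> int^'n \<Rightarrow> real" where
  "dotZ x k = (\<Sum>i\<in>UNIV. x$i * of_int (k$i))"

definition fhat :: "(real^'n \<Rightarrow> real^'n \<Rightarrow> real) \<Rightarrow> int^'n \<Rightarrow> real^'n \<Rightarrow> complex" where
  "fhat f k eta = complex_of_real ((1 / (2*pi)) ^ CARD('n)) *
     (LINT x : torus_box | lborel. (LINT v | lborel.
        cis (- (dotZ x k + inner v eta)) * complex_of_real (f x v)))"

definition density :: "(real^'n \<Rightarrow> real^'n \<Rightarrow> real) \<Rightarrow> real^'n \<Rightarrow> real" where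
  "density f x = (LINT v | lborel. f x v)"

definition rhohat :: "(real^'n \<Rightarrow> real^'n \<Rightarrow> real) \<Rightarrow> int^'n \<Rightarrow> complex" where
  "rhohat f l = complex_of_real ((1 / (2*pi)) ^ CARD('n)) *
     (LINT x : torus_box | lborel. cis (- dotZ x l) * complex_of_real (density f x))"

definition jbr2 :: "int^'n \<Rightarrow> real^'n \<Rightarrow> real" where
  "jbr2 k eta = sqrt (1 + (\<Sum>i\<in>UNIV. (of_int (k$i))^2) + (\<Sum>i\<in>UNIV. (eta$i)^2))"

definition jbr :: "int^'n \<Rightarrow> real" where
  "jbr k = sqrt (1 + (\<Sum>i\<in>UNIV. (of_int (k$i))^2))"

definition Aw :: "real \<Rightarrow> real \<Rightarrow> real \<Rightarrow> int^'n \<Rightarrow> real^'n \<Rightarrow> real" where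
  "Aw lam sig s k eta = jbr2 k eta powr sig * exp (lam * jbr2 k eta powr s)"

definition normsqZ :: "int^'n \<Rightarrow> real" where
  "normsqZ l = (\<Sum>i\<in>UNIV. (of_int (l$i))^2)"

definition unit_mi :: "'n \<Rightarrow> nat^'n" where
  "unit_mi i = (\<chi> m. if m = i then 1 else 0)"

definition mi_le :: "nat^'n \<Rightarrow> nat^'n \<Rightarrow> bool" where
  "mi_le a b = (\<forall>i. a$i \<le> b$i)"

definition mi_add :: "nat^'n \<Rightarrow> nat^'n \<Rightarrow> nat^'n" where
  "mi_add a b = (\<chi> i. a$i + b$i)"

definition mi_sub_unit :: "nat^'n \<Rightarrow> 'n \<Rightarrow> nat^'n" where
  "mi_sub_unit a i = (\<chi> m. if m = i then a$m - 1 else a$m)"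

definition gnorm_sq :: "real \<Rightarrow> real \<Rightarrow> real \<Rightarrow> (int^'n \<Rightarrow> real^'n \<Rightarrow> complex) \<Rightarrow> real" where
  "gnorm_sq lam sig s g =
     (\<Sum>\<^sub>\<infinity>k. (LINT eta | lborel. (cmod (g k eta))^2 * (Aw lam sig s k eta)^2))"

definition rho_norm_sq :: "real \<Rightarrow> real \<Rightarrow> real \<Rightarrow> (int^'n \<Rightarrow> complex) \<Rightarrow> real" where
  "rho_norm_sq lam sig s r =
     (\<Sum>\<^sub>\<infinity>k. (cmod (r k))^2 * (jbr k powr sig * exp (lam * jbr k powr s))^2)"

text \<open>Df is the family of derivatives: Df beta k eta = D^beta_eta fhat_k(eta) for beta <= alpha.\<close>
definition is_deriv_family ::
  "nat^'n \<Rightarrow> (real^'n \<Rightarrow> real^'n \<Rightarrow> real) \<Rightarrow> (nat^'n \<Rightarrow> int^'n \<Rightarrow> real^'n \<Rightarrow> complex) \<Rightarrow> bool" where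
  "is_deriv_family alpha f Df \<longleftrightarrow>
     Df 0 = fhat f \<and>
     (\<forall>beta i k eta. mi_le (mi_add beta (unit_mi i)) alpha \<longrightarrow>
        ((\<lambda>t. Df beta k (eta + t *\<^sub>R axis i 1)) has_vector_derivative
            Df (mi_add beta (unit_mi i)) k eta) (at 0))"

definition E_NL ::
  "real \<Rightarrow> real \<Rightarrow> real \<Rightarrow> (int^'n \<Rightarrow> complex) \<Rightarrow> (int^'n \<Rightarrow> complex) \<Rightarrow> nat^'n \<Rightarrow>
   (nat^'n \<Rightarrow> int^'n \<Rightarrow> real^'n \<Rightarrow> complex) \<Rightarrow> complex" where
  "E_NL lam sig s rho What alpha Df =
     (\<Sum>\<^sub>\<infinity>k. (LINT eta | lborel.
        complex_of_real (Aw lam sig s k eta) * cnj (Df alpha k eta) *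
        complex_of_real (Aw lam sig s k eta) *
        (\<Sum>i\<in>{i. 1 \<le> alpha$i}.
           (\<Sum>\<^sub>\<infinity>l\<in>UNIV - {0}. rho l * What l * of_int (l$i) *
                Df (mi_sub_unit alpha i) (k - l) eta))))"

end

theory Submission
  imports Defs
begin

text \<open>
  Along the decomposition \<open>k = l + (k - l)\<close> the weight splits as
  \<open>A\<^sub>k(\<eta>) \<le> 2^\<sigma> \<langle>l\<rangle>^\<sigma> exp(\<lambda> \<langle>l\<rangle>^s) A\<^sub>k\<^sub>-\<^sub>l(\<eta>) (\<langle>l\<rangle>^-\<sigma> + \<langle>k - l\<rangle>^-\<sigma>)\<close>,
  by \<open>\<langle>k,\<eta>\<rangle> \<le> \<langle>k - l,\<eta>\<rangle> + \<langle>l\<rangle>\<close> and subadditivity of \<open>t \<mapsto> t^s\<close> for \<open>s \<le> 1\<close>.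
  Since \<open>|What l| |l\<^sub>j| \<le> CW\<close>, after Cauchy-Schwarz in \<open>(k, \<eta>)\<close> it remains to bound, for each
  \<open>\<eta>\<close>, the \<open>\<ell>\<^sup>2\<close>-norm in \<open>k\<close> of \<open>A\<^sub>k(\<eta>) \<Sum>\<^sub>l |\<rho>\<^sub>l| |g\<^sub>k\<^sub>-\<^sub>l(\<eta>)|\<close>. Splitting the weight turns it
  into two convolutions of an \<open>\<ell>\<^sup>1\<close> and an \<open>\<ell>\<^sup>2\<close> sequence, handled by Young's inequality; the
  \<open>\<ell>\<^sup>1\<close> factors are bounded by Cauchy-Schwarz against \<open>\<Sum>\<^sub>l \<langle>l\<rangle>^-2\<sigma>\<close>, which is finite because
  \<open>\<sigma> > d/2\<close>. All sums and integrals are estimated in \<open>ennreal\<close>, so integrability is only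
  needed to convert back to the real-valued norms.
\<close>

section \<open>Nonnegative sums and integrals\<close>

abbreviation CS :: "'a measure" where "CS \<equiv> count_space UNIV"

lemma ennreal_infsum_eq_nn_integral:
  fixes f :: "'a \<Rightarrow> real"
  assumes "f summable_on A" "\<And>x. x \<in> A \<Longrightarrow> f x \<ge> 0"
  shows "ennreal (infsum f A) = (\<integral>\<^sup>+x. ennreal (f x) \<partial>count_space A)"
proof -
  have "(\<lambda>x. norm (f x)) summable_on A"
    using assms by (subst summable_on_cong[where g=f]) auto
  hence abs: "Infinite_Set_Sum.abs_summable_on f A" using abs_summable_equivalent by blast
  show ?thesis
    using nn_integral_conv_infsetsum[OF abs assms(2)] infsetsum_infsum[OF abs] by simp
qed

lemma ennreal_norm_infsum_le:
  fixes f :: "'a \<Rightarrow> complex"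
  shows "ennreal (norm (infsum f A)) \<le> (\<integral>\<^sup>+x. ennreal (norm (f x)) \<partial>count_space A)"
proof (cases "f summable_on A")
  case True
  hence abs: "(\<lambda>x. norm (f x)) summable_on A"
    using summable_on_iff_abs_summable_on_complex by blast
  have "norm (infsum f A) \<le> infsum (\<lambda>x. norm (f x)) A"
    by (rule norm_infsum_bound) (use abs in auto)
  hence "ennreal (norm (infsum f A)) \<le> ennreal (infsum (\<lambda>x. norm (f x)) A)"
    by (rule ennreal_leI)
  also have "\<dots> = (\<integral>\<^sup>+x. ennreal (norm (f x)) \<partial>count_space A)"
    by (rule ennreal_infsum_eq_nn_integral[OF abs]) auto
  finally show ?thesis .
next
  case False
  then show ?thesis by (simp add: infsum_not_exists)
qed

lemma ennreal_norm_integral_le: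
  fixes f :: "'a \<Rightarrow> complex"
  shows "ennreal (norm (integral\<^sup>L M f)) \<le> (\<integral>\<^sup>+x. ennreal (norm (f x)) \<partial>M)"
  by (cases "integrable M f") (simp_all add: integral_norm_bound_ennreal not_integrable_integral_eq)

lemma ennreal_le_sqrt:
  fixes x :: ennreal and y :: real
  assumes "x\<^sup>2 \<le> ennreal y" "0 \<le> y"
  shows "x \<le> ennreal (sqrt y)"
proof (cases x)
  case (real t)
  then have "ennreal (t\<^sup>2) \<le> ennreal y" using assms by (simp add: ennreal_power)
  hence "t\<^sup>2 \<le> y" using assms by (simp add: ennreal_le_iff)
  hence "t \<le> sqrt y" by (rule real_le_rsqrt)
  thus ?thesis using real by (simp add: ennreal_leI)
next
  case top
  then show ?thesis using assms by (simp add: top_unique)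
qed

lemma ennreal_add_square_le:
  fixes a b :: ennreal
  shows "(a + b)\<^sup>2 \<le> 2 * a\<^sup>2 + 2 * b\<^sup>2"
proof -
  have "(a + b)\<^sup>2 = a\<^sup>2 + 2 * a * b + b\<^sup>2"
    by (simp add: power2_eq_square algebra_simps mult_2 mult_2_right)
  also have "\<dots> \<le> a\<^sup>2 + (a\<^sup>2 + b\<^sup>2) + b\<^sup>2"
    by (intro add_mono order_refl sum_of_squares_ge_ennreal)
  also have "\<dots> = 2 * a\<^sup>2 + 2 * b\<^sup>2" by (simp add: mult_2 algebra_simps)
  finally show ?thesis .
qed

lemma borel_measurable_nn_integral_count_space:
  fixes F :: "'b \<Rightarrow> 'a::countable \<Rightarrow> ennreal"
  assumes "\<And>l. (\<lambda>x. F x l) \<in> borel_measurable M"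
  shows "(\<lambda>x. \<integral>\<^sup>+l. F x l \<partial>CS) \<in> borel_measurable M"
proof -
  interpret sigma_finite_measure "count_space (UNIV::'a set)"
    by (rule sigma_finite_measure_count_space_countable) simp
  have "(\<lambda>z. (\<lambda>l z. F (fst z) l) (snd z) z) \<in> borel_measurable (M \<Otimes>\<^sub>M CS)"
    by (rule measurable_compose_countable'[where I=UNIV]) (use assms in auto)
  then have "case_prod F \<in> borel_measurable (M \<Otimes>\<^sub>M CS)"
    by (simp add: case_prod_beta')
  thus ?thesis by (rule borel_measurable_nn_integral)
qed

lemma nn_integral_count_space_swap:
  "(\<integral>\<^sup>+x. \<integral>\<^sup>+y. f x y \<partial>CS \<partial>CS) = (\<integral>\<^sup>+y. \<integral>\<^sup>+x. f x y \<partial>CS \<partial>CS)"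
  using nn_integral_fst_count_space[of "case_prod f"] nn_integral_snd_count_space[of "case_prod f"]
  by simp

lemma nn_integral_count_space_diff_right:
  fixes f :: "'a::ab_group_add \<Rightarrow> ennreal"
  shows "(\<integral>\<^sup>+k. f (k - l) \<partial>CS) = (\<integral>\<^sup>+k. f k \<partial>CS)"
proof -
  have "bij_betw (\<lambda>k. k - l) UNIV (UNIV::'a set)"
    by (rule bij_betwI[where g="\<lambda>k. k + l"]) auto
  thus ?thesis by (rule nn_integral_bij_count_space)
qed

lemma nn_integral_count_space_diff_left:
  fixes f :: "'a::ab_group_add \<Rightarrow> ennreal"
  shows "(\<integral>\<^sup>+l. f (k - l) \<partial>CS) = (\<integral>\<^sup>+l. f l \<partial>CS)"
proof -
  have "bij_betw (\<lambda>l. k - l) UNIV (UNIV::'a set)"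
    by (rule bij_betwI[where g="\<lambda>l. k - l"]) auto
  thus ?thesis by (rule nn_integral_bij_count_space)
qed

lemma
  fixes F :: "'a::countable \<Rightarrow> 'b \<Rightarrow> ennreal"
  assumes M: "sigma_finite_measure M" and F: "\<And>k. F k \<in> borel_measurable M"
  shows borel_measurable_count_space_pair: "(\<lambda>z. F (fst z) (snd z)) \<in> borel_measurable (CS \<Otimes>\<^sub>M M)"
    and nn_integral_count_space_pair: "(\<integral>\<^sup>+k. \<integral>\<^sup>+x. F k x \<partial>M \<partial>CS) = (\<integral>\<^sup>+z. F (fst z) (snd z) \<partial>(CS \<Otimes>\<^sub>M M))"
proof -
  interpret sigma_finite_measure M by (rule M)
  show meas: "(\<lambda>z. F (fst z) (snd z)) \<in> borel_measurable (CS \<Otimes>\<^sub>M M)"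
    by (rule measurable_pair_measure_countable1) (use F in \<open>auto simp: measurable_ident_sets\<close>)
  show "(\<integral>\<^sup>+k. \<integral>\<^sup>+x. F k x \<partial>M \<partial>CS) = (\<integral>\<^sup>+z. F (fst z) (snd z) \<partial>(CS \<Otimes>\<^sub>M M))"
    using nn_integral_fst[OF meas] by simp
qed

lemma Cauchy_Schwarz_nn_integral_count_space_pair:
  fixes F H :: "'a::countable \<Rightarrow> 'b \<Rightarrow> ennreal"
  assumes M: "sigma_finite_measure M"
    and F: "\<And>k. F k \<in> borel_measurable M" and H: "\<And>k. H k \<in> borel_measurable M"
  shows "(\<integral>\<^sup>+k. \<integral>\<^sup>+x. F k x * H k x \<partial>M \<partial>CS)\<^sup>2
    \<le> (\<integral>\<^sup>+k. \<integral>\<^sup>+x. (F k x)\<^sup>2 \<partial>M \<partial>CS) * (\<integral>\<^sup>+k. \<integral>\<^sup>+x. (H k x)\<^sup>2 \<partial>M \<partial>CS)"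
proof -
  note pair = nn_integral_count_space_pair[OF M]
  have "(\<integral>\<^sup>+z. F (fst z) (snd z) * H (fst z) (snd z) \<partial>(CS \<Otimes>\<^sub>M M))\<^sup>2
    \<le> (\<integral>\<^sup>+z. (F (fst z) (snd z))\<^sup>2 \<partial>(CS \<Otimes>\<^sub>M M)) * (\<integral>\<^sup>+z. (H (fst z) (snd z))\<^sup>2 \<partial>(CS \<Otimes>\<^sub>M M))"
    by (intro Cauchy_Schwarz_nn_integral borel_measurable_count_space_pair[OF M] F H)
  then show ?thesis
    by (subst (1 2 3) pair) (use F H in auto)
qed

lemma nn_integral_count_space_swap_measure:
  fixes F :: "'a::countable \<Rightarrow> 'b \<Rightarrow> ennreal"
  assumes M: "sigma_finite_measure M" and F: "\<And>k. F k \<in> borel_measurable M"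
  shows "(\<integral>\<^sup>+k. \<integral>\<^sup>+x. F k x \<partial>M \<partial>CS) = (\<integral>\<^sup>+x. \<integral>\<^sup>+k. F k x \<partial>CS \<partial>M)"
proof -
  interpret pair_sigma_finite "CS::'a measure" M
    unfolding pair_sigma_finite_def using M sigma_finite_measure_count_space by auto
  have "case_prod F \<in> borel_measurable (CS \<Otimes>\<^sub>M M)"
    using borel_measurable_count_space_pair[OF M F] by (simp add: case_prod_beta')
  from Fubini'[OF this] show ?thesis by simp
qed

section \<open>Discrete convolution estimates\<close>

lemma Young_convolution_count_space:
  fixes p q :: "'a::ab_group_add \<Rightarrow> ennreal"
  shows "(\<integral>\<^sup>+k. (\<integral>\<^sup>+l. p l * q (k - l) \<partial>CS)\<^sup>2 \<partial>CS) \<le> (\<integral>\<^sup>+l. p l \<partial>CS)\<^sup>2 * (\<integral>\<^sup>+k. (q k)\<^sup>2 \<partial>CS)"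
proof -
  define Q where "Q = (\<integral>\<^sup>+k. (q k)\<^sup>2 \<partial>CS)"
  have sq: "(\<integral>\<^sup>+l. p l * q (k - l) \<partial>CS)\<^sup>2 = (\<integral>\<^sup>+l. \<integral>\<^sup>+m. p l * q (k - l) * (p m * q (k - m)) \<partial>CS \<partial>CS)" for k
    by (simp add: power2_eq_square nn_integral_cmult nn_integral_multc)
  \<comment> \<open>\<open>2 q(k-l) q(k-m) \<le> q(k-l)\<^sup>2 + q(k-m)\<^sup>2\<close>, after which each of the two terms sums to \<open>Q\<close> in \<open>k\<close>\<close>
  have pt: "2 * (\<integral>\<^sup>+l. p l * q (k - l) \<partial>CS)\<^sup>2 \<le>
      (\<integral>\<^sup>+l. \<integral>\<^sup>+m. p l * p m * ((q (k - l))\<^sup>2 + (q (k - m))\<^sup>2) \<partial>CS \<partial>CS)" for k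
  proof -
    have "2 * (\<integral>\<^sup>+l. p l * q (k - l) \<partial>CS)\<^sup>2 = (\<integral>\<^sup>+l. \<integral>\<^sup>+m. p l * p m * (2 * q (k - l) * q (k - m)) \<partial>CS \<partial>CS)"
      unfolding sq by (simp add: nn_integral_cmult[symmetric] mult_ac)
    also have "\<dots> \<le> (\<integral>\<^sup>+l. \<integral>\<^sup>+m. p l * p m * ((q (k - l))\<^sup>2 + (q (k - m))\<^sup>2) \<partial>CS \<partial>CS)"
      by (intro nn_integral_mono mult_left_mono sum_of_squares_ge_ennreal) auto
    finally show ?thesis .
  qed
  have inner: "(\<integral>\<^sup>+k. p l * p m * ((q (k - l))\<^sup>2 + (q (k - m))\<^sup>2) \<partial>CS) = 2 * Q * p l * p m" for l m
    using nn_integral_count_space_diff_right[of "\<lambda>k. (q k)\<^sup>2"]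
    by (simp add: nn_integral_cmult nn_integral_add Q_def mult_2 algebra_simps)
  have "2 * (\<integral>\<^sup>+k. (\<integral>\<^sup>+l. p l * q (k - l) \<partial>CS)\<^sup>2 \<partial>CS) = (\<integral>\<^sup>+k. 2 * (\<integral>\<^sup>+l. p l * q (k - l) \<partial>CS)\<^sup>2 \<partial>CS)"
    by (simp add: nn_integral_cmult)
  also have "\<dots> \<le> (\<integral>\<^sup>+k. \<integral>\<^sup>+l. \<integral>\<^sup>+m. p l * p m * ((q (k - l))\<^sup>2 + (q (k - m))\<^sup>2) \<partial>CS \<partial>CS \<partial>CS)"
    by (intro nn_integral_mono pt)
  also have "\<dots> = (\<integral>\<^sup>+l. \<integral>\<^sup>+m. \<integral>\<^sup>+k. p l * p m * ((q (k - l))\<^sup>2 + (q (k - m))\<^sup>2) \<partial>CS \<partial>CS \<partial>CS)"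
    by (subst nn_integral_count_space_swap) (intro nn_integral_cong nn_integral_count_space_swap)
  also have "\<dots> = (\<integral>\<^sup>+l. \<integral>\<^sup>+m. (2 * Q * p l) * p m \<partial>CS \<partial>CS)"
    by (simp only: inner)
  also have "\<dots> = 2 * ((\<integral>\<^sup>+l. p l \<partial>CS)\<^sup>2 * Q)"
    by (simp add: nn_integral_cmult nn_integral_multc power2_eq_square mult_ac)
  finally show ?thesis unfolding Q_def
    by (subst (asm) ennreal_mult_le_mult_iff) auto
qed

lemma convolution_le_split:
  fixes A Rw w rho b :: "'a::ab_group_add \<Rightarrow> ennreal"
  assumes split: "\<And>l. A k \<le> P * Rw l * A (k - l) * (w l + w (k - l))"
  shows "A k * (\<integral>\<^sup>+l. rho l * b (k - l) \<partial>CS)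
    \<le> P * ((\<integral>\<^sup>+l. (rho l * Rw l * w l) * (A (k - l) * b (k - l)) \<partial>CS)
          + (\<integral>\<^sup>+l. (w l * (A l * b l)) * (rho (k - l) * Rw (k - l)) \<partial>CS))"
proof -
  have "A k * (\<integral>\<^sup>+l. rho l * b (k - l) \<partial>CS) = (\<integral>\<^sup>+l. A k * (rho l * b (k - l)) \<partial>CS)"
    by (simp add: nn_integral_cmult)
  also have "\<dots> \<le> (\<integral>\<^sup>+l. (P * Rw l * A (k - l) * (w l + w (k - l))) * (rho l * b (k - l)) \<partial>CS)"
    by (intro nn_integral_mono mult_right_mono split) auto
  also have "\<dots> = P * (\<integral>\<^sup>+l. (rho l * Rw l * w l) * (A (k - l) * b (k - l)) \<partial>CS)
      + P * (\<integral>\<^sup>+l. (w (k - l) * (A (k - l) * b (k - l))) * (rho l * Rw l) \<partial>CS)"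
    by (simp add: nn_integral_add nn_integral_cmult distrib_left distrib_right mult_ac)
  also have "(\<integral>\<^sup>+l. (w (k - l) * (A (k - l) * b (k - l))) * (rho l * Rw l) \<partial>CS)
      = (\<integral>\<^sup>+l. (w l * (A l * b l)) * (rho (k - l) * Rw (k - l)) \<partial>CS)"
    using nn_integral_count_space_diff_left[of "\<lambda>l. (w l * (A l * b l)) * (rho (k - l) * Rw (k - l))" k]
    by simp
  finally show ?thesis by (simp add: distrib_left)
qed

text \<open>Each of the two terms produced by the splitting hypothesis is an \<open>\<ell>\<^sup>1 * \<ell>\<^sup>2\<close> convolution;
  its \<open>\<ell>\<^sup>1\<close> factor is controlled by Cauchy-Schwarz against \<open>w\<close>.\<close>
lemma weighted_convolution_bound:
  fixes A Rw w rho b :: "'a::ab_group_add \<Rightarrow> ennreal"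
  assumes split: "\<And>k l. A k \<le> P * Rw l * A (k - l) * (w l + w (k - l))"
  shows "(\<integral>\<^sup>+k. (A k * (\<integral>\<^sup>+l. rho l * b (k - l) \<partial>CS))\<^sup>2 \<partial>CS)
     \<le> 4 * P\<^sup>2 * (\<integral>\<^sup>+l. (w l)\<^sup>2 \<partial>CS) * (\<integral>\<^sup>+l. (rho l * Rw l)\<^sup>2 \<partial>CS) * (\<integral>\<^sup>+k. (A k * b k)\<^sup>2 \<partial>CS)"
proof -
  define x where "x l = rho l * Rw l" for l
  define y where "y k = A k * b k" for k
  define T1 where "T1 k = (\<integral>\<^sup>+l. (x l * w l) * y (k - l) \<partial>CS)" for k
  define T2 where "T2 k = (\<integral>\<^sup>+l. (w l * y l) * x (k - l) \<partial>CS)" for k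
  define X where "X = (\<integral>\<^sup>+l. (x l)\<^sup>2 \<partial>CS)"
  define Y where "Y = (\<integral>\<^sup>+l. (y l)\<^sup>2 \<partial>CS)"
  define W where "W = (\<integral>\<^sup>+l. (w l)\<^sup>2 \<partial>CS)"
  have CS: "(\<integral>\<^sup>+l. f l * g l \<partial>CS)\<^sup>2 \<le> (\<integral>\<^sup>+l. (f l)\<^sup>2 \<partial>CS) * (\<integral>\<^sup>+l. (g l)\<^sup>2 \<partial>CS)"
    for f g :: "'a \<Rightarrow> ennreal"
    by (rule Cauchy_Schwarz_nn_integral) auto
  have pt: "A k * (\<integral>\<^sup>+l. rho l * b (k - l) \<partial>CS) \<le> P * (T1 k + T2 k)" for k
    using convolution_le_split[where A=A and P=P and Rw=Rw and w=w and rho=rho and b=b and k=k, OF split]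
    unfolding T1_def T2_def x_def y_def .
  have T1: "(\<integral>\<^sup>+k. (T1 k)\<^sup>2 \<partial>CS) \<le> X * W * Y"
  proof -
    have "(\<integral>\<^sup>+k. (T1 k)\<^sup>2 \<partial>CS) \<le> (\<integral>\<^sup>+l. x l * w l \<partial>CS)\<^sup>2 * Y"
      unfolding T1_def Y_def by (rule Young_convolution_count_space)
    also have "\<dots> \<le> (X * W) * Y"
      unfolding X_def W_def by (intro mult_right_mono CS) auto
    finally show ?thesis .
  qed
  have T2: "(\<integral>\<^sup>+k. (T2 k)\<^sup>2 \<partial>CS) \<le> X * W * Y"
  proof -
    have "(\<integral>\<^sup>+k. (T2 k)\<^sup>2 \<partial>CS) \<le> (\<integral>\<^sup>+l. w l * y l \<partial>CS)\<^sup>2 * X"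
      unfolding T2_def X_def by (rule Young_convolution_count_space)
    also have "\<dots> \<le> (W * Y) * X"
      unfolding W_def Y_def by (intro mult_right_mono CS) auto
    finally show ?thesis by (simp add: mult_ac)
  qed
  have "(\<integral>\<^sup>+k. (A k * (\<integral>\<^sup>+l. rho l * b (k - l) \<partial>CS))\<^sup>2 \<partial>CS) \<le> (\<integral>\<^sup>+k. P\<^sup>2 * (2 * (T1 k)\<^sup>2 + 2 * (T2 k)\<^sup>2) \<partial>CS)"
  proof (intro nn_integral_mono)
    fix k
    have "(A k * (\<integral>\<^sup>+l. rho l * b (k - l) \<partial>CS))\<^sup>2 \<le> (P * (T1 k + T2 k))\<^sup>2"
      by (intro power_mono_ennreal pt)
    also have "\<dots> = P\<^sup>2 * (T1 k + T2 k)\<^sup>2" by (simp add: power_mult_distrib)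
    also have "\<dots> \<le> P\<^sup>2 * (2 * (T1 k)\<^sup>2 + 2 * (T2 k)\<^sup>2)"
      by (intro mult_left_mono ennreal_add_square_le) auto
    finally show "(A k * (\<integral>\<^sup>+l. rho l * b (k - l) \<partial>CS))\<^sup>2 \<le> P\<^sup>2 * (2 * (T1 k)\<^sup>2 + 2 * (T2 k)\<^sup>2)" .
  qed
  also have "\<dots> = P\<^sup>2 * (2 * (\<integral>\<^sup>+k. (T1 k)\<^sup>2 \<partial>CS) + 2 * (\<integral>\<^sup>+k. (T2 k)\<^sup>2 \<partial>CS))"
    by (simp add: nn_integral_cmult nn_integral_add)
  also have "\<dots> \<le> P\<^sup>2 * (2 * (X * W * Y) + 2 * (X * W * Y))"
    by (intro mult_left_mono add_mono T1 T2) auto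
  also have "\<dots> = 4 * P\<^sup>2 * W * X * Y"
    by (simp add: algebra_simps mult_2[symmetric])
  finally show ?thesis unfolding W_def X_def Y_def x_def y_def .
qed

section \<open>Japanese brackets and the exponential weight\<close>

lemma norm_vec_square: "(norm (x::real^'n))\<^sup>2 = (\<Sum>i\<in>UNIV. (x$i)\<^sup>2)"
  unfolding norm_vec_def L2_set_def by (simp add: sum_nonneg)

lemma jbr2_eq_norm: "jbr2 k eta = norm ((1::real), (\<chi> i. real_of_int (k$i)), eta)"
  unfolding jbr2_def norm_Pair by (simp add: norm_vec_square add.assoc sum_nonneg)

lemma jbr_eq_norm: "jbr k = norm ((1::real), (\<chi> i. real_of_int (k$i)))"
  unfolding jbr_def norm_Pair by (simp add: norm_vec_square)

lemma jbr_ge_1: "jbr k \<ge> 1"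
  unfolding jbr_def by (simp add: sum_nonneg)

lemma jbr2_ge_1: "jbr2 k eta \<ge> 1"
  unfolding jbr2_def by (simp add: sum_nonneg add_nonneg_nonneg)

lemma jbr_le_jbr2: "jbr k \<le> jbr2 k eta"
  unfolding jbr_def jbr2_def by (simp add: sum_nonneg)

lemma jbr2_le_jbr2_diff_add_jbr:
  fixes k l :: "int^'n" and eta :: "real^'n"
  shows "jbr2 k eta \<le> jbr2 (k - l) eta + jbr l"
proof -
  let ?v = "\<lambda>k::int^'n. (\<chi> i. real_of_int (k$i)) :: real^'n"
  have "((1::real), ?v k, eta) = ((1::real), ?v (k - l), eta) + (0, ?v l, 0)"
    by (simp add: vec_eq_iff)
  hence "jbr2 k eta \<le> jbr2 (k - l) eta + norm ((0::real), ?v l, 0::real^'n)"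
    unfolding jbr2_eq_norm
    using norm_triangle_ineq[of "((1::real), ?v (k - l), eta)" "((0::real), ?v l, 0::real^'n)"] by simp
  also have "norm ((0::real), ?v l, 0::real^'n) \<le> jbr l"
    unfolding jbr_eq_norm norm_Pair by (simp add: real_le_rsqrt)
  finally show ?thesis by simp
qed

lemma powr_add_le_add_powr:
  fixes x y s :: real
  assumes "0 \<le> x" "0 \<le> y" "0 < s" "s \<le> 1"
  shows "(x + y) powr s \<le> x powr s + y powr s"
proof (cases "x + y = 0")
  case True then show ?thesis using assms by simp
next
  case False
  hence p: "x + y > 0" using assms by simp
  \<comment> \<open>\<open>t \<le> t powr s\<close> on \<open>[0, 1]\<close>, applied to the fractions \<open>x / (x + y)\<close> and \<open>y / (x + y)\<close>\<close>
  have frac: "t / (x + y) \<le> (t / (x + y)) powr s" if "0 \<le> t" "t \<le> x + y" for t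
  proof -
    have "(t / (x + y)) powr 1 \<le> (t / (x + y)) powr s"
      by (rule powr_mono') (use assms that p in \<open>auto simp: divide_le_eq\<close>)
    thus ?thesis using that p by simp
  qed
  have "(x + y) powr s = (x + y) powr s * (x / (x + y) + y / (x + y))"
    using p by (simp add: add_divide_distrib[symmetric])
  also have "\<dots> \<le> (x + y) powr s * ((x / (x + y)) powr s + (y / (x + y)) powr s)"
    by (intro mult_left_mono add_mono frac) (use assms in auto)
  also have "\<dots> = x powr s + y powr s"
    using p assms by (simp add: powr_divide distrib_left)
  finally show ?thesis .
qed

lemma powr_add_le_two_powr:
  fixes a b sig :: real
  assumes "0 \<le> a" "0 \<le> b" "0 \<le> sig"
  shows "(a + b) powr sig \<le> 2 powr sig * (a powr sig + b powr sig)"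
proof -
  have "(a + b) powr sig \<le> (2 * max a b) powr sig"
    by (rule powr_mono2) (use assms in auto)
  also have "\<dots> = 2 powr sig * (max a b) powr sig"
    using assms by (simp add: powr_mult)
  also have "(max a b) powr sig \<le> a powr sig + b powr sig"
    by (cases "a \<le> b") (auto simp: max_def)
  finally show ?thesis by (simp add: mult_left_mono)
qed

lemma Aw_pos: "Aw lam sig s k eta > 0"
  unfolding Aw_def using jbr2_ge_1[of k eta] by simp

lemma borel_measurable_Aw:
  fixes k :: "int^'n"
  shows "(\<lambda>eta. Aw lam sig s k eta) \<in> borel_measurable lborel"
proof -
  have "continuous_on UNIV (\<lambda>eta. norm ((1::real), (\<chi> i. real_of_int (k$i)) :: real^'n, eta))"
    by (intro continuous_intros)
  moreover have "0 < norm ((1::real), (\<chi> i. real_of_int (k$i)) :: real^'n, eta)" for eta :: "real^'n"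
    by (simp add: zero_prod_def)
  ultimately have "continuous_on UNIV (\<lambda>eta. Aw lam sig s k eta)"
    unfolding Aw_def jbr2_eq_norm by (intro continuous_intros) auto
  thus ?thesis using borel_measurable_continuous_onI by simp
qed

lemma jbr2_powr_le_split:
  fixes k l :: "int^'n" and eta :: "real^'n"
  assumes sig: "0 \<le> sig"
  shows "jbr2 k eta powr sig
    \<le> 2 powr sig * jbr l powr sig * jbr2 (k - l) eta powr sig * (jbr l powr (-sig) + jbr (k - l) powr (-sig))"
proof -
  define J' where "J' = jbr2 (k - l) eta"
  define L where "L = jbr l"
  have pos: "J' \<ge> 1" "L \<ge> 1" "jbr (k - l) \<le> J'"
    unfolding J'_def L_def by (auto simp: jbr2_ge_1 jbr_ge_1 jbr_le_jbr2)
  have "jbr2 k eta powr sig \<le> (J' + L) powr sig"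
    unfolding J'_def L_def
    by (rule powr_mono2) (use sig jbr2_le_jbr2_diff_add_jbr[of k eta l] jbr2_ge_1[of k eta] in auto)
  also have "\<dots> \<le> 2 powr sig * (J' powr sig + L powr sig)"
    by (rule powr_add_le_two_powr) (use pos sig in auto)
  also have "J' powr sig + L powr sig = L powr sig * J' powr sig * (L powr (-sig) + J' powr (-sig))"
    using pos by (simp add: powr_minus distrib_left field_simps)
  also have "\<dots> \<le> L powr sig * J' powr sig * (L powr (-sig) + jbr (k - l) powr (-sig))"
    using pos sig jbr_ge_1[of "k - l"]
    by (intro mult_left_mono add_left_mono) (auto simp: powr_minus le_imp_inverse_le powr_mono2)
  finally show ?thesis
    unfolding J'_def L_def by (simp add: mult_left_mono mult.assoc)
qed

lemma exp_jbr2_powr_le_split: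
  fixes k l :: "int^'n" and eta :: "real^'n"
  assumes lam: "0 \<le> lam" and s: "0 < s" "s \<le> 1"
  shows "exp (lam * jbr2 k eta powr s) \<le> exp (lam * jbr l powr s) * exp (lam * jbr2 (k - l) eta powr s)"
proof -
  have "jbr2 k eta powr s \<le> (jbr2 (k - l) eta + jbr l) powr s"
    by (rule powr_mono2) (use s jbr2_le_jbr2_diff_add_jbr[of k eta l] jbr2_ge_1[of k eta] in auto)
  also have "\<dots> \<le> jbr2 (k - l) eta powr s + jbr l powr s"
    by (rule powr_add_le_add_powr) (use s jbr2_ge_1[of "k - l" eta] jbr_ge_1[of l] in auto)
  finally have "lam * jbr2 k eta powr s \<le> lam * jbr l powr s + lam * jbr2 (k - l) eta powr s"
    using lam by (simp add: distrib_left[symmetric] mult_left_mono)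
  thus ?thesis by (simp add: exp_add[symmetric])
qed

lemma Aw_le_split:
  assumes lam: "0 \<le> lam" and sig: "0 \<le> sig" and s: "0 < s" "s \<le> 1"
  shows "Aw lam sig s k eta \<le> 2 powr sig * (jbr l powr sig * exp (lam * jbr l powr s)) * Aw lam sig s (k - l) eta
            * (jbr l powr (-sig) + jbr (k - l) powr (-sig))"
proof -
  have "Aw lam sig s k eta
    \<le> (2 powr sig * jbr l powr sig * jbr2 (k - l) eta powr sig * (jbr l powr (-sig) + jbr (k - l) powr (-sig)))
      * (exp (lam * jbr l powr s) * exp (lam * jbr2 (k - l) eta powr s))"
    unfolding Aw_def
    by (intro mult_mono jbr2_powr_le_split exp_jbr2_powr_le_split lam sig s)
      (auto intro!: mult_nonneg_nonneg add_nonneg_nonneg)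
  then show ?thesis by (simp add: Aw_def mult_ac)
qed

section \<open>Summability of \<open>\<langle>l\<rangle>\<^sup>-\<^sup>2\<^sup>\<sigma>\<close> over the lattice\<close>

lemma summable_on_int_if_even:
  fixes h :: "int \<Rightarrow> real"
  assumes even: "\<And>n. h (- n) = h n" and nonneg: "\<And>n. 0 \<le> h n"
    and summable: "summable (\<lambda>m::nat. h (int m))"
  shows "h summable_on UNIV"
proof -
  have nat: "(h \<circ> int) summable_on UNIV"
    using summable nonneg by (intro norm_summable_imp_summable_on) (simp add: o_def)
  have "h summable_on range int"
    using nat by (subst summable_on_reindex) auto
  moreover have "h summable_on range (\<lambda>m. - int m)"
    using nat even by (subst summable_on_reindex) (auto simp: o_def inj_on_def)
  ultimately have "h summable_on (range int \<union> range (\<lambda>m. - int m))"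
    by (rule summable_on_union)
  also have "range int \<union> range (\<lambda>m. - int m) = UNIV"
  proof (intro set_eqI iffI)
    fix n :: int
    show "n \<in> range int \<union> range (\<lambda>m. - int m)"
    proof (cases n rule: int_cases)
      case (neg m)
      then have "n = - int (Suc m)" by simp
      then show ?thesis by blast
    qed auto
  qed auto
  finally show ?thesis .
qed

lemma summable_one_plus_square_neg_powr:
  fixes q :: real assumes q: "q > 1/2"
  shows "summable (\<lambda>m::nat. (1 + (real m)\<^sup>2) powr (-q))"
proof (rule summable_comparison_test')
  show "summable (\<lambda>m::nat. real m powr (-2*q))"
    using q by (subst summable_real_powr_iff) auto
  show "norm ((1 + (real m)\<^sup>2) powr (-q)) \<le> real m powr (-2*q)" if "m \<ge> 1" for m
  proof -
    have "(1 + (real m)\<^sup>2) powr (-q) \<le> ((real m)\<^sup>2) powr (-q)"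
      using that q by (intro powr_mono2') auto
    also have "\<dots> = real m powr (-2*q)"
    proof -
      have "(real m)\<^sup>2 = real m powr 2" using that by (simp add: powr_realpow)
      then have "((real m)\<^sup>2) powr (-q) = (real m powr 2) powr (-q)" by (simp only:)
      also have "\<dots> = real m powr (2 * (-q))" by (rule powr_powr)
      finally show ?thesis by simp
    qed
    finally show ?thesis by simp
  qed
qed

lemma summable_on_lattice_prod:
  fixes h :: "int \<Rightarrow> real"
  assumes "h summable_on UNIV" "\<And>n. 0 \<le> h n"
  shows "(\<lambda>l::int^'n. \<Prod>i\<in>UNIV. h (l$i)) summable_on UNIV"
proof -
  have "Infinite_Sum.abs_summable_on h UNIV"
    using summable_on_cong[of UNIV h "\<lambda>n. norm (h n)"] assms by simp
  then have "Infinite_Set_Sum.abs_summable_on h UNIV"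
    unfolding abs_summable_equivalent .
  then have "Infinite_Set_Sum.abs_summable_on (\<lambda>g. \<Prod>i\<in>(UNIV::'n set). h (g i)) (PiE UNIV (\<lambda>_. UNIV))"
    by (intro abs_summable_on_prod_PiE) auto
  then have "Infinite_Sum.abs_summable_on (\<lambda>g. \<Prod>i\<in>(UNIV::'n set). h (g i)) UNIV"
    unfolding PiE_UNIV abs_summable_equivalent .
  then have "(\<lambda>g. \<Prod>i\<in>(UNIV::'n set). h (g i)) summable_on UNIV"
    by (rule abs_summable_summable)
  moreover have "range vec_nth = (UNIV :: ('n \<Rightarrow> int) set)"
    by (rule surjI[of _ vec_lambda]) (simp add: fun_eq_iff)
  ultimately have "(\<lambda>g. \<Prod>i\<in>(UNIV::'n set). h (g i)) summable_on range (vec_nth :: int^'n \<Rightarrow> _)"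
    by simp
  then have "((\<lambda>g. \<Prod>i\<in>(UNIV::'n set). h (g i)) \<circ> vec_nth) summable_on (UNIV :: (int^'n) set)"
    by (rule summable_on_reindex[THEN iffD1, rotated]) (simp add: inj_on_def vec_eq_iff)
  then show ?thesis by (simp add: o_def)
qed

lemma jbr_neg_powr_square_le_prod:
  fixes l :: "int^'n"
  assumes sig: "sig \<ge> 0"
  shows "(jbr l powr (-sig))\<^sup>2 \<le> (\<Prod>i\<in>UNIV. (1 + (real_of_int (l$i))\<^sup>2) powr (-(sig / real CARD('n))))"
proof -
  define S where "S = 1 + (\<Sum>i\<in>UNIV. (real_of_int (l$i))\<^sup>2)"
  define q where "q = sig / real CARD('n)"
  have S1: "S \<ge> 1" unfolding S_def by (simp add: sum_nonneg)
  have "jbr l = S powr (1/2)"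
    unfolding jbr_def S_def by (simp add: powr_half_sqrt sum_nonneg add_nonneg_nonneg)
  hence "(jbr l powr (-sig))\<^sup>2 = S powr (-sig)"
    using S1 by (simp add: powr_powr power2_eq_square powr_add[symmetric])
  also have "\<dots> = (\<Prod>i\<in>(UNIV::'n set). S powr (-q))"
    using S1 by (simp add: powr_power q_def)
  also have "\<dots> \<le> (\<Prod>i\<in>UNIV. (1 + (real_of_int (l$i))\<^sup>2) powr (-q))"
  proof (intro prod_mono conjI)
    fix i :: 'n
    have "(real_of_int (l$i))\<^sup>2 \<le> (\<Sum>i\<in>UNIV. (real_of_int (l$i))\<^sup>2)"
      by (rule member_le_sum) auto
    hence "1 + (real_of_int (l$i))\<^sup>2 \<le> S" unfolding S_def by simp
    thus "S powr (-q) \<le> (1 + (real_of_int (l$i))\<^sup>2) powr (-q)"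
      by (intro powr_mono2') (use sig in \<open>auto simp: q_def add_pos_nonneg\<close>)
  qed simp
  finally show ?thesis by (simp add: q_def)
qed

lemma summable_on_jbr_neg_powr_square:
  assumes sig: "sig > real CARD('n) / 2"
  shows "(\<lambda>l::int^'n. (jbr l powr (-sig))\<^sup>2) summable_on UNIV"
proof (rule summable_on_comparison_test)
  have sig0: "0 \<le> sig" using sig by (smt (verit) of_nat_0_le_iff divide_nonneg_nonneg)
  define q where "q = sig / real CARD('n)"
  have "q > 1/2" using sig by (simp add: q_def field_simps)
  then have "summable (\<lambda>m::nat. (1 + (real_of_int (int m))\<^sup>2) powr (-q))"
    using summable_one_plus_square_neg_powr by simp
  then have "(\<lambda>n::int. (1 + (real_of_int n)\<^sup>2) powr (-q)) summable_on UNIV"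
    by (intro summable_on_int_if_even) auto
  then show "(\<lambda>l::int^'n. \<Prod>i\<in>UNIV. (1 + (real_of_int (l$i))\<^sup>2) powr (-q)) summable_on UNIV"
    by (rule summable_on_lattice_prod) simp
  show "(jbr l powr (-sig))\<^sup>2 \<le> (\<Prod>i\<in>UNIV. (1 + (real_of_int (l$i))\<^sup>2) powr (-q))" for l :: "int^'n"
    unfolding q_def by (rule jbr_neg_powr_square_le_prod[OF sig0])
qed simp

section \<open>The nonlinear term\<close>

definition has_finite_gnorm :: "real \<Rightarrow> real \<Rightarrow> real \<Rightarrow> (int^'n \<Rightarrow> real^'n \<Rightarrow> complex) \<Rightarrow> bool" where
  "has_finite_gnorm lam sig s g \<longleftrightarrow>
     (\<forall>k. integrable lborel (\<lambda>eta. (cmod (g k eta))\<^sup>2 * (Aw lam sig s k eta)\<^sup>2)) \<and>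
     (\<lambda>k. LINT eta | lborel. (cmod (g k eta))\<^sup>2 * (Aw lam sig s k eta)\<^sup>2) summable_on UNIV"

definition gnorm_sq_nn :: "real \<Rightarrow> real \<Rightarrow> real \<Rightarrow> (int^'n \<Rightarrow> real^'n \<Rightarrow> complex) \<Rightarrow> ennreal" where
  "gnorm_sq_nn lam sig s g =
     (\<integral>\<^sup>+k. \<integral>\<^sup>+eta. ennreal ((cmod (g k eta))\<^sup>2 * (Aw lam sig s k eta)\<^sup>2) \<partial>lborel \<partial>CS)"

definition rho_norm_sq_nn :: "real \<Rightarrow> real \<Rightarrow> real \<Rightarrow> (int^'n \<Rightarrow> complex) \<Rightarrow> ennreal" where
  "rho_norm_sq_nn lam sig s r =
     (\<integral>\<^sup>+l. ennreal ((cmod (r l))\<^sup>2 * (jbr l powr sig * exp (lam * jbr l powr s))\<^sup>2) \<partial>CS)"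

definition rho_conv :: "(int^'n \<Rightarrow> complex) \<Rightarrow> (int^'n \<Rightarrow> real^'n \<Rightarrow> complex) \<Rightarrow> int^'n \<Rightarrow> real^'n \<Rightarrow> ennreal" where
  "rho_conv r g k eta = (\<integral>\<^sup>+l. ennreal (cmod (r l)) * ennreal (cmod (g (k - l) eta)) \<partial>CS)"

lemma gnorm_sq_nonneg: "gnorm_sq lam sig s g \<ge> 0"
  unfolding gnorm_sq_def by (intro infsum_nonneg) auto

lemma rho_norm_sq_nonneg: "rho_norm_sq lam sig s r \<ge> 0"
  unfolding rho_norm_sq_def by (intro infsum_nonneg) auto

lemma ennreal_gnorm_sq:
  assumes "has_finite_gnorm lam sig s g"
  shows "ennreal (gnorm_sq lam sig s g) = gnorm_sq_nn lam sig s g"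
proof -
  have "ennreal (gnorm_sq lam sig s g)
      = (\<integral>\<^sup>+k. ennreal (LINT eta | lborel. (cmod (g k eta))\<^sup>2 * (Aw lam sig s k eta)\<^sup>2) \<partial>CS)"
    unfolding gnorm_sq_def
    by (rule ennreal_infsum_eq_nn_integral) (use assms in \<open>auto simp: has_finite_gnorm_def\<close>)
  also have "\<dots> = gnorm_sq_nn lam sig s g"
    unfolding gnorm_sq_nn_def
    by (intro nn_integral_cong nn_integral_eq_integral[symmetric])
      (use assms in \<open>auto simp: has_finite_gnorm_def\<close>)
  finally show ?thesis .
qed

lemma ennreal_rho_norm_sq:
  assumes "(\<lambda>k. (cmod (r k))\<^sup>2 * (jbr k powr sig * exp (lam * jbr k powr s))\<^sup>2) summable_on UNIV"
  shows "ennreal (rho_norm_sq lam sig s r) = rho_norm_sq_nn lam sig s r"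
  unfolding rho_norm_sq_def rho_norm_sq_nn_def by (rule ennreal_infsum_eq_nn_integral[OF assms]) auto

lemma borel_measurable_cmod_if_finite_gnorm:
  assumes "has_finite_gnorm lam sig s g"
  shows "(\<lambda>eta. cmod (g k eta)) \<in> borel_measurable lborel"
proof -
  have "integrable lborel (\<lambda>eta. (cmod (g k eta))\<^sup>2 * (Aw lam sig s k eta)\<^sup>2)"
    using assms unfolding has_finite_gnorm_def by blast
  then have "(\<lambda>eta. (cmod (g k eta))\<^sup>2 * (Aw lam sig s k eta)\<^sup>2) \<in> borel_measurable lborel"
    by measurable
  then have "(\<lambda>eta. sqrt ((cmod (g k eta))\<^sup>2 * (Aw lam sig s k eta)\<^sup>2) / Aw lam sig s k eta)
      \<in> borel_measurable lborel"
    using borel_measurable_Aw by measurable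
  moreover have "sqrt ((cmod (g k eta))\<^sup>2 * (Aw lam sig s k eta)\<^sup>2) / Aw lam sig s k eta = cmod (g k eta)"
    for eta
    using Aw_pos[of lam sig s k eta] by (simp add: real_sqrt_mult)
  ultimately show ?thesis by simp
qed

lemma borel_measurable_rho_conv:
  assumes "\<And>k. (\<lambda>eta. cmod (g k eta)) \<in> borel_measurable lborel"
  shows "(\<lambda>eta. rho_conv r g k eta) \<in> borel_measurable lborel"
  unfolding rho_conv_def by (rule borel_measurable_nn_integral_count_space) (use assms in measurable)

lemma rho_conv_weighted_bound_at:
  fixes r :: "int^'n \<Rightarrow> complex"
  assumes lam: "0 \<le> lam" and sig: "0 \<le> sig" and s: "0 < s" "s \<le> 1"
  shows "(\<integral>\<^sup>+k. (ennreal (Aw lam sig s k eta) * rho_conv r g k eta)\<^sup>2 \<partial>CS)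
    \<le> 4 * (ennreal (2 powr sig))\<^sup>2 * (\<integral>\<^sup>+(l::int^'n). ennreal ((jbr l powr (-sig))\<^sup>2) \<partial>CS)
       * rho_norm_sq_nn lam sig s r * (\<integral>\<^sup>+k. ennreal ((cmod (g k eta))\<^sup>2 * (Aw lam sig s k eta)\<^sup>2) \<partial>CS)"
proof -
  have split: "ennreal (Aw lam sig s k eta) \<le> ennreal (2 powr sig) * ennreal (jbr l powr sig * exp (lam * jbr l powr s))
     * ennreal (Aw lam sig s (k - l) eta) * (ennreal (jbr l powr (-sig)) + ennreal (jbr (k - l) powr (-sig)))"
    for k l
  proof -
    have "ennreal (Aw lam sig s k eta) \<le> ennreal (2 powr sig * (jbr l powr sig * exp (lam * jbr l powr s))
        * Aw lam sig s (k - l) eta * (jbr l powr (-sig) + jbr (k - l) powr (-sig)))"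
      by (rule ennreal_leI, rule Aw_le_split) (use lam sig s in auto)
    also have "\<dots> = ennreal (2 powr sig) * ennreal (jbr l powr sig * exp (lam * jbr l powr s))
     * ennreal (Aw lam sig s (k - l) eta) * (ennreal (jbr l powr (-sig)) + ennreal (jbr (k - l) powr (-sig)))"
      using Aw_pos[of lam sig s "k - l" eta]
      by (simp add: ennreal_mult ennreal_plus[symmetric] del: ennreal_plus)
    finally show ?thesis .
  qed
  have r: "(\<integral>\<^sup>+l. (ennreal (cmod (r l)) * ennreal (jbr l powr sig * exp (lam * jbr l powr s)))\<^sup>2 \<partial>CS)
      = rho_norm_sq_nn lam sig s r"
    unfolding rho_norm_sq_nn_def
    by (intro nn_integral_cong) (simp add: ennreal_mult[symmetric] ennreal_power power_mult_distrib)
  have g: "(ennreal (Aw lam sig s k eta) * ennreal (cmod (g k eta)))\<^sup>2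
      = ennreal ((cmod (g k eta))\<^sup>2 * (Aw lam sig s k eta)\<^sup>2)" for k
    using Aw_pos[of lam sig s k eta]
    by (simp add: ennreal_mult[symmetric] ennreal_power power_mult_distrib mult.commute)
  have "(\<integral>\<^sup>+k. (ennreal (Aw lam sig s k eta) * rho_conv r g k eta)\<^sup>2 \<partial>CS)
    \<le> 4 * (ennreal (2 powr sig))\<^sup>2 * (\<integral>\<^sup>+(l::int^'n). (ennreal (jbr l powr (-sig)))\<^sup>2 \<partial>CS)
      * (\<integral>\<^sup>+l. (ennreal (cmod (r l)) * ennreal (jbr l powr sig * exp (lam * jbr l powr s)))\<^sup>2 \<partial>CS)
      * (\<integral>\<^sup>+k. (ennreal (Aw lam sig s k eta) * ennreal (cmod (g k eta)))\<^sup>2 \<partial>CS)"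
    unfolding rho_conv_def
    by (rule weighted_convolution_bound[where A="\<lambda>k. ennreal (Aw lam sig s k eta)" and P="ennreal (2 powr sig)"
          and Rw="\<lambda>l. ennreal (jbr l powr sig * exp (lam * jbr l powr s))" and w="\<lambda>l. ennreal (jbr l powr (-sig))"
          and rho="\<lambda>l. ennreal (cmod (r l))" and b="\<lambda>k. ennreal (cmod (g k eta))", OF split])
  then show ?thesis
    unfolding r g by (simp add: ennreal_power)
qed

lemma rho_conv_weighted_bound:
  fixes r :: "int^'n \<Rightarrow> complex"
  assumes lam: "0 \<le> lam" and sig: "0 \<le> sig" and s: "0 < s" "s \<le> 1"
    and g: "\<And>k. (\<lambda>eta. cmod (g k eta)) \<in> borel_measurable lborel"
  shows "(\<integral>\<^sup>+k. \<integral>\<^sup>+eta. (ennreal (Aw lam sig s k eta) * rho_conv r g k eta)\<^sup>2 \<partial>lborel \<partial>CS)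
    \<le> 4 * (ennreal (2 powr sig))\<^sup>2 * (\<integral>\<^sup>+(l::int^'n). ennreal ((jbr l powr (-sig))\<^sup>2) \<partial>CS)
       * rho_norm_sq_nn lam sig s r * gnorm_sq_nn lam sig s g"
proof -
  let ?K = "4 * (ennreal (2 powr sig))\<^sup>2 * (\<integral>\<^sup>+(l::int^'n). ennreal ((jbr l powr (-sig))\<^sup>2) \<partial>CS) * rho_norm_sq_nn lam sig s r"
  have sf: "sigma_finite_measure lborel" by (rule lborel.sigma_finite_measure_axioms)
  have meas: "(\<lambda>eta. ennreal ((cmod (g k eta))\<^sup>2 * (Aw lam sig s k eta)\<^sup>2)) \<in> borel_measurable lborel" for k
    using g borel_measurable_Aw by measurable
  have "(\<integral>\<^sup>+k. \<integral>\<^sup>+eta. (ennreal (Aw lam sig s k eta) * rho_conv r g k eta)\<^sup>2 \<partial>lborel \<partial>CS)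
      = (\<integral>\<^sup>+eta. \<integral>\<^sup>+k. (ennreal (Aw lam sig s k eta) * rho_conv r g k eta)\<^sup>2 \<partial>CS \<partial>lborel)"
    by (rule nn_integral_count_space_swap_measure[OF sf])
      (use borel_measurable_rho_conv[OF g] borel_measurable_Aw in measurable)
  also have "\<dots> \<le> (\<integral>\<^sup>+eta. ?K * (\<integral>\<^sup>+k. ennreal ((cmod (g k eta))\<^sup>2 * (Aw lam sig s k eta)\<^sup>2) \<partial>CS) \<partial>lborel)"
    by (intro nn_integral_mono rho_conv_weighted_bound_at lam sig s)
  also have "\<dots> = ?K * (\<integral>\<^sup>+eta. \<integral>\<^sup>+k. ennreal ((cmod (g k eta))\<^sup>2 * (Aw lam sig s k eta)\<^sup>2) \<partial>CS \<partial>lborel)"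
    by (rule nn_integral_cmult) (rule borel_measurable_nn_integral_count_space, rule meas)
  also have "(\<integral>\<^sup>+eta. \<integral>\<^sup>+k. ennreal ((cmod (g k eta))\<^sup>2 * (Aw lam sig s k eta)\<^sup>2) \<partial>CS \<partial>lborel)
      = gnorm_sq_nn lam sig s g"
    unfolding gnorm_sq_nn_def by (rule nn_integral_count_space_swap_measure[OF sf, symmetric]) (rule meas)
  finally show ?thesis .
qed

lemma weighted_rho_conv_pairing_le:
  fixes r :: "int^'n \<Rightarrow> complex"
  assumes lam: "0 \<le> lam" and sig: "0 \<le> sig" and s: "0 < s" "s \<le> 1"
    and g: "\<And>k. (\<lambda>eta. cmod (g k eta)) \<in> borel_measurable lborel"
    and h: "\<And>k. (\<lambda>eta. cmod (h k eta)) \<in> borel_measurable lborel"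
  shows "(\<integral>\<^sup>+k. \<integral>\<^sup>+eta. ennreal (Aw lam sig s k eta * cmod (g k eta))
             * (ennreal (Aw lam sig s k eta) * rho_conv r h k eta) \<partial>lborel \<partial>CS)\<^sup>2
    \<le> gnorm_sq_nn lam sig s g * (4 * (ennreal (2 powr sig))\<^sup>2 * (\<integral>\<^sup>+(l::int^'n). ennreal ((jbr l powr (-sig))\<^sup>2) \<partial>CS)
       * rho_norm_sq_nn lam sig s r * gnorm_sq_nn lam sig s h)"
proof -
  have "(\<integral>\<^sup>+k. \<integral>\<^sup>+eta. ennreal (Aw lam sig s k eta * cmod (g k eta))
             * (ennreal (Aw lam sig s k eta) * rho_conv r h k eta) \<partial>lborel \<partial>CS)\<^sup>2
    \<le> (\<integral>\<^sup>+k. \<integral>\<^sup>+eta. (ennreal (Aw lam sig s k eta * cmod (g k eta)))\<^sup>2 \<partial>lborel \<partial>CS)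
      * (\<integral>\<^sup>+k. \<integral>\<^sup>+eta. (ennreal (Aw lam sig s k eta) * rho_conv r h k eta)\<^sup>2 \<partial>lborel \<partial>CS)"
    by (rule Cauchy_Schwarz_nn_integral_count_space_pair[OF lborel.sigma_finite_measure_axioms])
      (use g borel_measurable_rho_conv[OF h] borel_measurable_Aw in measurable)
  also have "(\<integral>\<^sup>+k. \<integral>\<^sup>+eta. (ennreal (Aw lam sig s k eta * cmod (g k eta)))\<^sup>2 \<partial>lborel \<partial>CS)
      = gnorm_sq_nn lam sig s g"
    unfolding gnorm_sq_nn_def
    by (intro nn_integral_cong) (simp add: ennreal_power less_imp_le[OF Aw_pos] power_mult_distrib mult.commute)
  finally show ?thesis
    using rho_conv_weighted_bound[OF lam sig s h, of r] by (simp add: mult_left_mono order_trans)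
qed

lemma normsqZ_pos: "l \<noteq> 0 \<Longrightarrow> normsqZ l > 0"
proof -
  assume "l \<noteq> 0"
  then obtain j where j: "l$j \<noteq> 0" by (metis vec_eq_iff zero_index)
  have "0 < (real_of_int (l$j))\<^sup>2" using j by simp
  also have "\<dots> \<le> normsqZ l" unfolding normsqZ_def by (rule member_le_sum) auto
  finally show ?thesis .
qed

lemma abs_nth_le_normsqZ: "\<bar>real_of_int (l$i)\<bar> \<le> normsqZ l"
proof -
  have "\<bar>z\<bar> \<le> z\<^sup>2" for z :: int
  proof (cases "z = 0")
    case False
    then have "\<bar>z\<bar> * 1 \<le> \<bar>z\<bar> * \<bar>z\<bar>" by (intro mult_left_mono) auto
    then show ?thesis by (simp add: power2_eq_square)
  qed simp
  then have "\<bar>real_of_int (l$i)\<bar> \<le> (real_of_int (l$i))\<^sup>2"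
    by (metis of_int_abs of_int_le_iff of_int_power)
  also have "\<dots> \<le> normsqZ l" unfolding normsqZ_def by (rule member_le_sum) auto
  finally show ?thesis .
qed

lemma norm_What_mult_nth_le:
  assumes W: "\<forall>l. l \<noteq> 0 \<longrightarrow> cmod (What l) \<le> CW / normsqZ l" and l: "l \<noteq> 0"
  shows "cmod (What l) * \<bar>real_of_int (l$i)\<bar> \<le> CW"
proof -
  have "cmod (What l) * \<bar>real_of_int (l$i)\<bar> \<le> (CW / normsqZ l) * normsqZ l"
    by (intro mult_mono abs_nth_le_normsqZ) (use W l in \<open>auto intro: order_trans[OF norm_ge_zero]\<close>)
  also have "\<dots> = CW" using normsqZ_pos[OF l] by simp
  finally show ?thesis .
qed

lemma norm_infsum_What_le_rho_conv:
  fixes r What :: "int^'n \<Rightarrow> complex" and g :: "int^'n \<Rightarrow> real^'n \<Rightarrow> complex"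
  assumes CW: "0 \<le> CW" and W: "\<forall>l. l \<noteq> 0 \<longrightarrow> cmod (What l) \<le> CW / normsqZ l"
  shows "ennreal (cmod (\<Sum>\<^sub>\<infinity>l\<in>UNIV - {0}. r l * What l * of_int (l$i) * g (k - l) eta))
    \<le> ennreal CW * rho_conv r g k eta"
proof -
  have summand: "ennreal (cmod (r l * What l * of_int (l$i) * g (k - l) eta)) * indicator (UNIV - {0}) l
      \<le> ennreal CW * (ennreal (cmod (r l)) * ennreal (cmod (g (k - l) eta)))" for l
  proof (cases "l = 0")
    case False
    have "cmod (r l * What l * of_int (l$i) * g (k - l) eta)
        = cmod (r l) * (cmod (What l) * \<bar>real_of_int (l$i)\<bar>) * cmod (g (k - l) eta)"
      by (simp add: norm_mult mult_ac)
    also have "\<dots> \<le> cmod (r l) * CW * cmod (g (k - l) eta)"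
      by (intro mult_right_mono mult_left_mono norm_What_mult_nth_le[OF W False]) auto
    finally show ?thesis
      using CW False by (auto simp: ennreal_mult[symmetric] mult_ac intro: ennreal_leI)
  qed simp
  have "ennreal (cmod (\<Sum>\<^sub>\<infinity>l\<in>UNIV - {0}. r l * What l * of_int (l$i) * g (k - l) eta))
      \<le> (\<integral>\<^sup>+l. ennreal (cmod (r l * What l * of_int (l$i) * g (k - l) eta)) \<partial>count_space (UNIV - {0}))"
    by (rule ennreal_norm_infsum_le)
  also have "\<dots> = (\<integral>\<^sup>+l. ennreal (cmod (r l * What l * of_int (l$i) * g (k - l) eta))
      * indicator (UNIV - {0}) l \<partial>CS)"
    by (rule nn_integral_count_space_indicator) simp
  also have "\<dots> \<le> (\<integral>\<^sup>+l. ennreal CW * (ennreal (cmod (r l)) * ennreal (cmod (g (k - l) eta))) \<partial>CS)"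
    by (intro nn_integral_mono summand)
  also have "\<dots> = ennreal CW * rho_conv r g k eta"
    unfolding rho_conv_def by (rule nn_integral_cmult) simp
  finally show ?thesis .
qed

lemma norm_E_NL_integrand_le:
  fixes A :: real and g0 :: complex and G :: "'n \<Rightarrow> int^'n \<Rightarrow> real^'n \<Rightarrow> complex"
  assumes A: "0 \<le> A" and CW: "0 \<le> CW" and W: "\<forall>l. l \<noteq> 0 \<longrightarrow> cmod (What l) \<le> CW / normsqZ l"
  shows "ennreal (cmod (complex_of_real A * cnj g0 * complex_of_real A *
        (\<Sum>i\<in>I. (\<Sum>\<^sub>\<infinity>l\<in>UNIV - {0}. r l * What l * of_int (l$i) * G i (k - l) eta))))
     \<le> ennreal CW * (\<Sum>i\<in>I. ennreal (A * cmod g0) * (ennreal A * rho_conv r (G i) k eta))"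
proof -
  define S where "S i = (\<Sum>\<^sub>\<infinity>l\<in>UNIV - {0}. r l * What l * of_int (l$i) * G i (k - l) eta)" for i
  have "ennreal (cmod (\<Sum>i\<in>I. S i)) \<le> ennreal (\<Sum>i\<in>I. cmod (S i))"
    by (intro ennreal_leI norm_sum)
  also have "\<dots> = (\<Sum>i\<in>I. ennreal (cmod (S i)))"
    by (rule sum_ennreal[symmetric]) simp
  also have "\<dots> \<le> (\<Sum>i\<in>I. ennreal CW * rho_conv r (G i) k eta)"
    unfolding S_def by (intro sum_mono norm_infsum_What_le_rho_conv CW W)
  also have "\<dots> = ennreal CW * (\<Sum>i\<in>I. rho_conv r (G i) k eta)"
    by (rule sum_distrib_left[symmetric])
  finally have sum: "ennreal (cmod (\<Sum>i\<in>I. S i)) \<le> ennreal CW * (\<Sum>i\<in>I. rho_conv r (G i) k eta)" .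
  have "ennreal (cmod (complex_of_real A * cnj g0 * complex_of_real A * (\<Sum>i\<in>I. S i)))
      = ennreal (A * cmod g0) * ennreal A * ennreal (cmod (\<Sum>i\<in>I. S i))"
    using A by (simp add: norm_mult ennreal_mult'' mult_ac ennreal_mult)
  also have "\<dots> \<le> ennreal (A * cmod g0) * ennreal A * (ennreal CW * (\<Sum>i\<in>I. rho_conv r (G i) k eta))"
    by (intro mult_left_mono sum) simp
  also have "\<dots> = ennreal CW * (\<Sum>i\<in>I. ennreal (A * cmod g0) * (ennreal A * rho_conv r (G i) k eta))"
    by (simp only: sum_distrib_left) (simp add: mult_ac)
  finally show ?thesis unfolding S_def .
qed

lemma norm_E_NL_le_sum:
  fixes r What :: "int^'n \<Rightarrow> complex" and Df :: "nat^'n \<Rightarrow> int^'n \<Rightarrow> real^'n \<Rightarrow> complex"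
  assumes CW: "0 \<le> CW" and W: "\<forall>l. l \<noteq> 0 \<longrightarrow> cmod (What l) \<le> CW / normsqZ l"
    and meas: "\<And>i k. 1 \<le> alpha$i \<Longrightarrow> (\<lambda>eta. cmod (Df (mi_sub_unit alpha i) k eta)) \<in> borel_measurable lborel"
    and meas_alpha: "\<And>k. (\<lambda>eta. cmod (Df alpha k eta)) \<in> borel_measurable lborel"
  shows "ennreal (cmod (E_NL lam sig s r What alpha Df))
    \<le> ennreal CW * (\<Sum>i\<in>{i. 1 \<le> alpha$i}. \<integral>\<^sup>+k. \<integral>\<^sup>+eta. ennreal (Aw lam sig s k eta * cmod (Df alpha k eta))
          * (ennreal (Aw lam sig s k eta) * rho_conv r (Df (mi_sub_unit alpha i)) k eta) \<partial>lborel \<partial>CS)"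
    (is "_ \<le> ennreal CW * (\<Sum>i\<in>?I. \<integral>\<^sup>+k. \<integral>\<^sup>+eta. ?F i k eta \<partial>lborel \<partial>CS)")
proof -
  have F: "(\<lambda>eta. ?F i k eta) \<in> borel_measurable lborel" if "i \<in> ?I" for i k
  proof -
    have "(\<lambda>eta. cmod (Df (mi_sub_unit alpha i) k eta)) \<in> borel_measurable lborel" for k
      using meas that by simp
    then show ?thesis
      using meas_alpha borel_measurable_Aw borel_measurable_rho_conv by measurable
  qed
  have "ennreal (cmod (E_NL lam sig s r What alpha Df))
      \<le> (\<integral>\<^sup>+k. \<integral>\<^sup>+eta. ennreal (cmod (complex_of_real (Aw lam sig s k eta) * cnj (Df alpha k eta) *
        complex_of_real (Aw lam sig s k eta) * (\<Sum>i\<in>?I. (\<Sum>\<^sub>\<infinity>l\<in>UNIV - {0}. r l * What l * of_int (l$i) *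
          Df (mi_sub_unit alpha i) (k - l) eta)))) \<partial>lborel \<partial>CS)"
    unfolding E_NL_def
    by (rule order_trans[OF ennreal_norm_infsum_le nn_integral_mono[OF ennreal_norm_integral_le]])
  also have "\<dots> \<le> (\<integral>\<^sup>+k. \<integral>\<^sup>+eta. ennreal CW * (\<Sum>i\<in>?I. ?F i k eta) \<partial>lborel \<partial>CS)"
    by (intro nn_integral_mono norm_E_NL_integrand_le CW W) (simp add: less_imp_le[OF Aw_pos])
  also have "\<dots> = (\<integral>\<^sup>+k. ennreal CW * (\<Sum>i\<in>?I. \<integral>\<^sup>+eta. ?F i k eta \<partial>lborel) \<partial>CS)"
  proof (intro nn_integral_cong)
    fix k
    have "(\<integral>\<^sup>+eta. ennreal CW * (\<Sum>i\<in>?I. ?F i k eta) \<partial>lborel) = ennreal CW * (\<integral>\<^sup>+eta. (\<Sum>i\<in>?I. ?F i k eta) \<partial>lborel)"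
      by (rule nn_integral_cmult) (rule borel_measurable_sum, rule F)
    also have "(\<integral>\<^sup>+eta. (\<Sum>i\<in>?I. ?F i k eta) \<partial>lborel) = (\<Sum>i\<in>?I. \<integral>\<^sup>+eta. ?F i k eta \<partial>lborel)"
      by (rule nn_integral_sum) (rule F)
    finally show "(\<integral>\<^sup>+eta. ennreal CW * (\<Sum>i\<in>?I. ?F i k eta) \<partial>lborel)
        = ennreal CW * (\<Sum>i\<in>?I. \<integral>\<^sup>+eta. ?F i k eta \<partial>lborel)" .
  qed
  also have "\<dots> = ennreal CW * (\<Sum>i\<in>?I. \<integral>\<^sup>+k. \<integral>\<^sup>+eta. ?F i k eta \<partial>lborel \<partial>CS)"
    by (simp add: nn_integral_cmult nn_integral_sum)
  finally show ?thesis .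
qed

lemma weighted_rho_conv_pairing_le_sqrt:
  fixes r :: "int^'n \<Rightarrow> complex"
  assumes lam: "0 \<le> lam" and sig: "real CARD('n) / 2 < sig" and s: "0 < s" "s \<le> 1"
    and g: "has_finite_gnorm lam sig s g" and h: "has_finite_gnorm lam sig s h"
    and r: "(\<lambda>k. (cmod (r k))\<^sup>2 * (jbr k powr sig * exp (lam * jbr k powr s))\<^sup>2) summable_on UNIV"
  shows "(\<integral>\<^sup>+k. \<integral>\<^sup>+eta. ennreal (Aw lam sig s k eta * cmod (g k eta))
             * (ennreal (Aw lam sig s k eta) * rho_conv r h k eta) \<partial>lborel \<partial>CS)
    \<le> ennreal (2 * 2 powr sig * sqrt (\<Sum>\<^sub>\<infinity>l::int^'n. (jbr l powr (-sig))\<^sup>2)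
        * sqrt (gnorm_sq lam sig s g) * sqrt (rho_norm_sq lam sig s r) * sqrt (gnorm_sq lam sig s h))"
proof -
  define L where "L = (\<Sum>\<^sub>\<infinity>l::int^'n. (jbr l powr (-sig))\<^sup>2)"
  define K where "K = 4 * (2 powr sig)\<^sup>2 * L"
  have sig0: "0 \<le> sig" using sig by (smt (verit) of_nat_0_le_iff divide_nonneg_nonneg)
  have L: "(\<integral>\<^sup>+(l::int^'n). ennreal ((jbr l powr (-sig))\<^sup>2) \<partial>CS) = ennreal L" "0 \<le> L"
    unfolding L_def using summable_on_jbr_neg_powr_square[OF sig]
    by (auto intro: ennreal_infsum_eq_nn_integral[symmetric] infsum_nonneg)
  have K: "ennreal K = 4 * (ennreal (2 powr sig))\<^sup>2 * ennreal L"
    using L(2) by (simp add: K_def ennreal_mult ennreal_power)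
  have eq: "ennreal (gnorm_sq lam sig s g * (K * rho_norm_sq lam sig s r * gnorm_sq lam sig s h))
      = gnorm_sq_nn lam sig s g * (ennreal K * rho_norm_sq_nn lam sig s r * gnorm_sq_nn lam sig s h)"
    unfolding ennreal_gnorm_sq[OF g, symmetric] ennreal_gnorm_sq[OF h, symmetric]
      ennreal_rho_norm_sq[OF r, symmetric]
    using L(2) by (simp add: K_def ennreal_mult gnorm_sq_nonneg rho_norm_sq_nonneg)
  have "(\<integral>\<^sup>+k. \<integral>\<^sup>+eta. ennreal (Aw lam sig s k eta * cmod (g k eta))
             * (ennreal (Aw lam sig s k eta) * rho_conv r h k eta) \<partial>lborel \<partial>CS)
    \<le> ennreal (sqrt (gnorm_sq lam sig s g * (K * rho_norm_sq lam sig s r * gnorm_sq lam sig s h)))"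
  proof (rule ennreal_le_sqrt)
    show "0 \<le> gnorm_sq lam sig s g * (K * rho_norm_sq lam sig s r * gnorm_sq lam sig s h)"
      using L(2) by (simp add: K_def gnorm_sq_nonneg rho_norm_sq_nonneg)
    show "(\<integral>\<^sup>+k. \<integral>\<^sup>+eta. ennreal (Aw lam sig s k eta * cmod (g k eta))
             * (ennreal (Aw lam sig s k eta) * rho_conv r h k eta) \<partial>lborel \<partial>CS)\<^sup>2
      \<le> ennreal (gnorm_sq lam sig s g * (K * rho_norm_sq lam sig s r * gnorm_sq lam sig s h))"
      unfolding eq K L(1)[symmetric]
      by (intro weighted_rho_conv_pairing_le[OF lam sig0 s]
          borel_measurable_cmod_if_finite_gnorm[OF g] borel_measurable_cmod_if_finite_gnorm[OF h])
  qed
  also have "sqrt (gnorm_sq lam sig s g * (K * rho_norm_sq lam sig s r * gnorm_sq lam sig s h))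
      = 2 * 2 powr sig * sqrt L * sqrt (gnorm_sq lam sig s g) * sqrt (rho_norm_sq lam sig s r)
        * sqrt (gnorm_sq lam sig s h)"
    by (simp add: K_def real_sqrt_mult mult_ac)
  finally show ?thesis unfolding L_def .
qed

lemma norm_E_NL_le:
  fixes r What :: "int^'n \<Rightarrow> complex" and Df :: "nat^'n \<Rightarrow> int^'n \<Rightarrow> real^'n \<Rightarrow> complex"
  assumes lam: "0 \<le> lam" and sig: "real CARD('n) / 2 < sig" and s: "0 < s" "s \<le> 1"
    and CW: "0 \<le> CW" and W: "\<forall>l. l \<noteq> 0 \<longrightarrow> cmod (What l) \<le> CW / normsqZ l"
    and Df: "\<forall>beta \<in> insert alpha {mi_sub_unit alpha i | i. 1 \<le> alpha$i}. has_finite_gnorm lam sig s (Df beta)"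
    and r: "(\<lambda>k. (cmod (r k))\<^sup>2 * (jbr k powr sig * exp (lam * jbr k powr s))\<^sup>2) summable_on UNIV"
  shows "cmod (E_NL lam sig s r What alpha Df)
    \<le> 2 * 2 powr sig * sqrt (\<Sum>\<^sub>\<infinity>l::int^'n. (jbr l powr (-sig))\<^sup>2) * CW
      * sqrt (gnorm_sq lam sig s (Df alpha)) * sqrt (rho_norm_sq lam sig s r)
      * (\<Sum>i\<in>{i. 1 \<le> alpha$i}. sqrt (gnorm_sq lam sig s (Df (mi_sub_unit alpha i))))"
proof -
  define I where "I = {i. 1 \<le> alpha$i}"
  define c where "c = 2 * 2 powr sig * sqrt (\<Sum>\<^sub>\<infinity>l::int^'n. (jbr l powr (-sig))\<^sup>2)"
  define B where "B i = c * sqrt (gnorm_sq lam sig s (Df alpha)) * sqrt (rho_norm_sq lam sig s r)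
      * sqrt (gnorm_sq lam sig s (Df (mi_sub_unit alpha i)))" for i
  have fin_alpha: "has_finite_gnorm lam sig s (Df alpha)"
    and fin: "i \<in> I \<Longrightarrow> has_finite_gnorm lam sig s (Df (mi_sub_unit alpha i))" for i
    using Df unfolding I_def by auto
  have B: "0 \<le> B i" for i
    by (simp add: B_def c_def infsum_nonneg gnorm_sq_nonneg rho_norm_sq_nonneg)
  have "ennreal (cmod (E_NL lam sig s r What alpha Df))
      \<le> ennreal CW * (\<Sum>i\<in>I. \<integral>\<^sup>+k. \<integral>\<^sup>+eta. ennreal (Aw lam sig s k eta * cmod (Df alpha k eta))
          * (ennreal (Aw lam sig s k eta) * rho_conv r (Df (mi_sub_unit alpha i)) k eta) \<partial>lborel \<partial>CS)"
    unfolding I_def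
    by (rule norm_E_NL_le_sum[OF CW W])
      (use borel_measurable_cmod_if_finite_gnorm[OF fin] borel_measurable_cmod_if_finite_gnorm[OF fin_alpha]
        in \<open>auto simp: I_def\<close>)
  also have "\<dots> \<le> ennreal CW * (\<Sum>i\<in>I. ennreal (B i))"
    unfolding B_def c_def
    by (intro mult_left_mono sum_mono weighted_rho_conv_pairing_le_sqrt lam sig s fin_alpha fin r) auto
  also have "\<dots> = ennreal (CW * (\<Sum>i\<in>I. B i))"
    using CW B by (simp add: sum_ennreal ennreal_mult sum_nonneg)
  finally have "cmod (E_NL lam sig s r What alpha Df) \<le> CW * (\<Sum>i\<in>I. B i)"
    using CW B by (subst (asm) ennreal_le_iff) (auto intro!: sum_nonneg mult_nonneg_nonneg)
  then show ?thesis
    by (simp add: I_def B_def c_def sum_distrib_left mult_ac)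
qed

lemma nonneg_if_norm_le_div_normsqZ:
  fixes What :: "int^'n \<Rightarrow> complex"
  assumes W: "\<forall>l. l \<noteq> 0 \<longrightarrow> cmod (What l) \<le> CW / normsqZ l"
  shows "0 \<le> CW"
proof -
  define l :: "int^'n" where "l = (\<chi> i. 1)"
  have l: "l \<noteq> 0" unfolding l_def by (simp add: vec_eq_iff)
  have "0 \<le> cmod (What l)" by simp
  also have "\<dots> \<le> CW / normsqZ l" using W l by blast
  finally show ?thesis using normsqZ_pos[OF l] by (simp add: zero_le_divide_iff)
qed

theorem mainTheorem9:
  fixes s sig CW :: real and What :: "int^'n \<Rightarrow> complex"
  assumes s: "0 < s" "s \<le> 1"
    and sig: "sig \<ge> real CARD('n) / 2 + 6"
    and W: "\<forall>l. l \<noteq> 0 \<longrightarrow> cmod (What l) \<le> CW / normsqZ l"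
  shows "\<exists>C. \<forall>(lam::real) (alpha::nat^'n) (f::real^'n \<Rightarrow> real^'n \<Rightarrow> real) Df.
     0 < lam \<longrightarrow>
     (\<forall>x v i. f (x + (2*pi) *\<^sub>R axis i 1) v = f x v) \<longrightarrow>
     set_integrable (lborel \<Otimes>\<^sub>M lborel) (torus_box \<times> UNIV) (\<lambda>(x,v). f x v) \<longrightarrow>
     is_deriv_family alpha f Df \<longrightarrow>
     (\<forall>beta \<in> insert alpha {mi_sub_unit alpha i | i. 1 \<le> alpha$i}.
        (\<forall>k. integrable lborel (\<lambda>eta. (cmod (Df beta k eta))^2 * (Aw lam sig s k eta)^2)) \<and>
        (\<lambda>k. LINT eta | lborel. (cmod (Df beta k eta))^2 * (Aw lam sig s k eta)^2) summable_on UNIV) \<longrightarrow>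
     (\<lambda>k. (cmod (rhohat f k))^2 * (jbr k powr sig * exp (lam * jbr k powr s))^2) summable_on UNIV \<longrightarrow>
     cmod (E_NL lam sig s (rhohat f) What alpha Df)
       \<le> C * sqrt (gnorm_sq lam sig s (Df alpha)) * sqrt (rho_norm_sq lam sig s (rhohat f)) *
           (\<Sum>i\<in>{i. 1 \<le> alpha$i}. sqrt (gnorm_sq lam sig s (Df (mi_sub_unit alpha i))))"
proof -
  have CW: "0 \<le> CW" by (rule nonneg_if_norm_le_div_normsqZ[OF W])
  have sig': "real CARD('n) / 2 < sig" using sig by simp
  show ?thesis
    unfolding has_finite_gnorm_def[symmetric]
    by (rule exI, intro allI impI, rule norm_E_NL_le[OF _ sig' s CW W]) auto
qed

end
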